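(* Let $T:\mathcal{A}\to\mathcal{A}$ be a Markov operator on a von Neumann algebra $\mathcal{A}\subseteq\mathcal{B}(\mathcal{H})$. The set of potentials for $T$ is a norm-closed cone in $\mathcal{A}_+$ which is invariant under $T$.
   Context: A Markov operator is a normal completely positive unital linear map on $\mathcal{A}$ ($\mathbbm{1}\in\mathcal{A}$). $x\in\mathcal{A}_+$ is $T$-summable if $\sum_{n\ge0}T^n(x)$ converges strongly to an element of $\mathcal{A}_+$; $y\in\mathcal{A}_+$ is a potential for $T$ if $y=\sum_{n\ge0}T^n(x)$ for some $T$-summable $x\in\mathcal{A}_+$. *)

theory Defs
  imports "HOL-Analysis.Analysis"
begin

text \<open>A complex Hilbert space H is the same thing as a real Hilbert space (real inner
  product = real part of the complex inner product) together with the real-linear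
  isometry iunit (multiplication by the imaginary unit), with iunit (iunit x) = - x.
  The complex inner product is recovered as cinner x y = inner x y + i * inner x (iunit y)
  (linear in the first argument).\<close>

class chilbert = real_inner + complete_space +
  fixes iunit :: "'a \<Rightarrow> 'a"
  assumes iunit_add: "iunit (x + y) = iunit x + iunit y"
    and iunit_scaleR: "iunit (r *\<^sub>R x) = r *\<^sub>R iunit x"
    and iunit_iunit: "iunit (iunit x) = - x"
    and inner_iunit: "inner (iunit x) (iunit y) = inner x y"

definition cinner :: "'h::chilbert \<Rightarrow> 'h \<Rightarrow> complex" where
  "cinner x y = Complex (inner x y) (inner x (iunit y))"

definition cscale :: "complex \<Rightarrow> 'h::chilbert \<Rightarrow> 'h" where
  "cscale c x = Re c *\<^sub>R x + Im c *\<^sub>R iunit x"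

definition bop :: "('h::chilbert \<Rightarrow> 'h) set" where
  "bop = {a. bounded_linear a \<and> (\<forall>x. a (iunit x) = iunit (a x))}"

definition adj_op :: "('h::chilbert \<Rightarrow> 'h) \<Rightarrow> ('h \<Rightarrow> 'h)" where
  "adj_op a = (THE b. b \<in> bop \<and> (\<forall>x y. cinner (a x) y = cinner x (b y)))"

definition op_add :: "('h::chilbert \<Rightarrow> 'h) \<Rightarrow> ('h \<Rightarrow> 'h) \<Rightarrow> ('h \<Rightarrow> 'h)" where
  "op_add a b = (\<lambda>h. a h + b h)"

definition op_diff :: "('h::chilbert \<Rightarrow> 'h) \<Rightarrow> ('h \<Rightarrow> 'h) \<Rightarrow> ('h \<Rightarrow> 'h)" where
  "op_diff a b = (\<lambda>h. a h - b h)"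

definition op_scale :: "complex \<Rightarrow> ('h::chilbert \<Rightarrow> 'h) \<Rightarrow> ('h \<Rightarrow> 'h)" where
  "op_scale c a = (\<lambda>h. cscale c (a h))"

text \<open>Operator norm (real and complex operator norms coincide).\<close>
definition op_norm :: "('h::chilbert \<Rightarrow> 'h) \<Rightarrow> real" where
  "op_norm a = onorm a"

definition commutant :: "('h::chilbert \<Rightarrow> 'h) set \<Rightarrow> ('h \<Rightarrow> 'h) set" where
  "commutant S = {b \<in> bop. \<forall>a\<in>S. a \<circ> b = b \<circ> a}"

text \<open>A von Neumann algebra: a self-adjoint set of bounded operators equal to its
  bicommutant (equivalently, a unital *-subalgebra of B(H) closed in the strong
  operator topology).\<close>
definition von_neumann_algebra :: "('h::chilbert \<Rightarrow> 'h) set \<Rightarrow> bool" where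
  "von_neumann_algebra A \<longleftrightarrow>
     A \<subseteq> bop \<and> (\<forall>a\<in>A. adj_op a \<in> A) \<and> commutant (commutant A) = A"

definition pos_op :: "('h::chilbert \<Rightarrow> 'h) \<Rightarrow> bool" where
  "pos_op a \<longleftrightarrow> a \<in> bop \<and> (\<forall>h. cinner (a h) h \<in> \<real> \<and> 0 \<le> Re (cinner (a h) h))"

definition pos_part :: "('h::chilbert \<Rightarrow> 'h) set \<Rightarrow> ('h \<Rightarrow> 'h) set" where
  "pos_part A = {a \<in> A. pos_op a}"

definition op_le :: "('h::chilbert \<Rightarrow> 'h) \<Rightarrow> ('h \<Rightarrow> 'h) \<Rightarrow> bool" where
  "op_le a b \<longleftrightarrow> pos_op (op_diff b a)"

text \<open>Positivity of an n x n operator matrix [a i j] as an operator on H^n.\<close>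
definition mat_pos :: "nat \<Rightarrow> (nat \<Rightarrow> nat \<Rightarrow> ('h::chilbert \<Rightarrow> 'h)) \<Rightarrow> bool" where
  "mat_pos n a \<longleftrightarrow> (\<forall>i<n. \<forall>j<n. a i j \<in> bop) \<and>
     (\<forall>h::nat \<Rightarrow> 'h. let q = (\<Sum>i<n. \<Sum>j<n. cinner (a i j (h j)) (h i)) in q \<in> \<real> \<and> 0 \<le> Re q)"

definition self_adjoint_part :: "('h::chilbert \<Rightarrow> 'h) set \<Rightarrow> ('h \<Rightarrow> 'h) set" where
  "self_adjoint_part A = {a \<in> A. adj_op a = a}"

definition is_sup_in :: "('h::chilbert \<Rightarrow> 'h) set \<Rightarrow> ('h \<Rightarrow> 'h) set \<Rightarrow> ('h \<Rightarrow> 'h) \<Rightarrow> bool" where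
  "is_sup_in A D x \<longleftrightarrow> x \<in> self_adjoint_part A \<and> (\<forall>d\<in>D. op_le d x) \<and>
     (\<forall>z\<in>self_adjoint_part A. (\<forall>d\<in>D. op_le d z) \<longrightarrow> op_le x z)"

definition linear_on :: "('h::chilbert \<Rightarrow> 'h) set \<Rightarrow> (('h \<Rightarrow> 'h) \<Rightarrow> ('h \<Rightarrow> 'h)) \<Rightarrow> bool" where
  "linear_on A T \<longleftrightarrow> (\<forall>a\<in>A. \<forall>b\<in>A. T (op_add a b) = op_add (T a) (T b)) \<and>
     (\<forall>c. \<forall>a\<in>A. T (op_scale c a) = op_scale c (T a))"

definition completely_positive_on :: "('h::chilbert \<Rightarrow> 'h) set \<Rightarrow> (('h \<Rightarrow> 'h) \<Rightarrow> ('h \<Rightarrow> 'h)) \<Rightarrow> bool" where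
  "completely_positive_on A T \<longleftrightarrow>
     (\<forall>n a. (\<forall>i<n. \<forall>j<n. a i j \<in> A) \<longrightarrow> mat_pos n a \<longrightarrow> mat_pos n (\<lambda>i j. T (a i j)))"

text \<open>Normal: T(sup x_alpha) = sup T(x_alpha) for every bounded increasing net in A_+.
  An increasing net is represented by its (upward directed) set of values D, which has
  the same supremum; boundedness is implied by the existence of the supremum.\<close>
definition normal_on :: "('h::chilbert \<Rightarrow> 'h) set \<Rightarrow> (('h \<Rightarrow> 'h) \<Rightarrow> ('h \<Rightarrow> 'h)) \<Rightarrow> bool" where
  "normal_on A T \<longleftrightarrow>
     (\<forall>D x. D \<noteq> {} \<and> D \<subseteq> pos_part A \<and>
        (\<forall>a\<in>D. \<forall>b\<in>D. \<exists>c\<in>D. op_le a c \<and> op_le b c) \<and> is_sup_in A D x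
        \<longrightarrow> is_sup_in A (T ` D) (T x))"

definition markov_operator :: "('h::chilbert \<Rightarrow> 'h) set \<Rightarrow> (('h \<Rightarrow> 'h) \<Rightarrow> ('h \<Rightarrow> 'h)) \<Rightarrow> bool" where
  "markov_operator A T \<longleftrightarrow> T ` A \<subseteq> A \<and> linear_on A T \<and> completely_positive_on A T \<and>
     normal_on A T \<and> T id = id"

definition strong_sums :: "(nat \<Rightarrow> ('h::chilbert \<Rightarrow> 'h)) \<Rightarrow> ('h \<Rightarrow> 'h) \<Rightarrow> bool" where
  "strong_sums s y \<longleftrightarrow> (\<forall>h. (\<lambda>N. \<Sum>n<N. s n h) \<longlonglongrightarrow> y h)"

definition T_summable :: "('h::chilbert \<Rightarrow> 'h) set \<Rightarrow> (('h \<Rightarrow> 'h) \<Rightarrow> ('h \<Rightarrow> 'h)) \<Rightarrow> ('h \<Rightarrow> 'h) \<Rightarrow> bool" where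
  "T_summable A T x \<longleftrightarrow> x \<in> pos_part A \<and> (\<exists>y\<in>pos_part A. strong_sums (\<lambda>n. (T ^^ n) x) y)"

definition potentials :: "('h::chilbert \<Rightarrow> 'h) set \<Rightarrow> (('h \<Rightarrow> 'h) \<Rightarrow> ('h \<Rightarrow> 'h)) \<Rightarrow> ('h \<Rightarrow> 'h) set" where
  "potentials A T = {y \<in> pos_part A. \<exists>x. T_summable A T x \<and> strong_sums (\<lambda>n. (T ^^ n) x) y}"

end

theory Submission
  imports Defs
begin

text \<open>Let \<open>x\<close> be \<open>T\<close>-summable with potential \<open>y = \<Sum>\<^sub>n T\<^sup>n x\<close>. The partial sums \<open>s\<^sub>N\<close> increase
  strongly to \<open>y\<close>, so by normality \<open>T y = sup\<^sub>N T s\<^sub>N = sup\<^sub>N (s\<^sub>N\<^sub>+\<^sub>1 - x) = y - x\<close>. Since the series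
  telescopes, the potentials are exactly the \<open>y \<ge> 0\<close> with \<open>y - T y \<ge> 0\<close> and \<open>T\<^sup>N y \<rightarrow> 0\<close> strongly,
  and each of these conditions is stable under sums, nonnegative multiples and \<open>T\<close>.

  For norm closedness, positivity and unitality of \<open>T\<close> give \<open>\<bar>\<langle>T\<^sup>N d h, h\<rangle>\<bar> \<le> \<parallel>d\<parallel> \<parallel>h\<parallel>\<^sup>2\<close> uniformly
  in \<open>N\<close>, so the first two conditions pass to norm limits and \<open>\<langle>T\<^sup>N y h, h\<rangle> \<rightarrow> 0\<close>. As
  \<open>0 \<le> T\<^sup>N y \<le> y\<close>, the Cauchy-Schwarz inequality for the positive form of \<open>T\<^sup>N y\<close> gives
  \<open>\<parallel>T\<^sup>N y h\<parallel>\<^sup>2 \<le> \<parallel>y\<parallel> \<langle>T\<^sup>N y h, h\<rangle>\<close>, which upgrades this weak convergence to strong convergence.\<close>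

section \<open>Bounded operators\<close>

lemma norm_iunit: "norm (iunit (x::'h::chilbert)) = norm x"
  by (simp add: norm_eq_sqrt_inner inner_iunit)

lemma bounded_linear_iunit: "bounded_linear (iunit :: 'h::chilbert \<Rightarrow> 'h)"
  by (rule bounded_linear_intro[where K=1]) (simp_all add: iunit_add iunit_scaleR norm_iunit)

lemma inner_iunit_left: "inner (iunit x) (y::'h::chilbert) = - inner x (iunit y)"
  by (metis inner_iunit iunit_iunit inner_minus_left)

lemma inner_iunit_self: "inner x (iunit (x::'h::chilbert)) = 0"
  using inner_iunit_left[of x x] by (simp add: inner_commute)

lemma bop_bounded_linear: "a \<in> bop \<Longrightarrow> bounded_linear a"
  by (simp add: bop_def)

lemma bop_iunit: "a \<in> bop \<Longrightarrow> a (iunit x) = iunit (a x)"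
  by (simp add: bop_def)

lemmas bop_simps = linear_simps(1,2,5)[OF bop_bounded_linear] bop_iunit

lemma op_add_in_bop: "a \<in> bop \<Longrightarrow> b \<in> bop \<Longrightarrow> op_add a b \<in> bop"
  by (auto simp: bop_def op_add_def iunit_add intro: bounded_linear_add)

lemma op_diff_in_bop: "a \<in> bop \<Longrightarrow> b \<in> bop \<Longrightarrow> op_diff a b \<in> bop"
  by (auto simp: bop_def op_diff_def linear_simps(2)[OF bounded_linear_iunit]
      intro: bounded_linear_sub)

lemma op_scale_in_bop: "a \<in> bop \<Longrightarrow> op_scale c a \<in> bop"
  by (auto simp: bop_def op_scale_def cscale_def iunit_add iunit_scaleR iunit_iunit
      intro!: bounded_linear_add bounded_linear_compose[OF bounded_linear_scaleR_right]
        bounded_linear_compose[OF bounded_linear_iunit])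

lemma id_in_bop: "id \<in> bop"
  by (simp add: bop_def bounded_linear_ident[unfolded id_def[symmetric]])

lemma commutant_subset_bop: "commutant S \<subseteq> bop"
  by (auto simp: commutant_def)

lemma op_add_in_commutant:
  assumes "S \<subseteq> bop" "a \<in> commutant S" "b \<in> commutant S"
  shows "op_add a b \<in> commutant S"
  using assms op_add_in_bop[of a b] by (auto simp: commutant_def op_add_def fun_eq_iff subset_iff bop_simps)

lemma op_diff_in_commutant:
  assumes "S \<subseteq> bop" "a \<in> commutant S" "b \<in> commutant S"
  shows "op_diff a b \<in> commutant S"
  using assms op_diff_in_bop[of a b] by (auto simp: commutant_def op_diff_def fun_eq_iff subset_iff bop_simps)

lemma op_scale_in_commutant:
  assumes "S \<subseteq> bop" "a \<in> commutant S"
  shows "op_scale c a \<in> commutant S"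
  using assms op_scale_in_bop[of a c]
  by (auto simp: commutant_def op_scale_def cscale_def fun_eq_iff subset_iff bop_simps)

lemma id_in_commutant: "id \<in> commutant S"
  by (auto simp: commutant_def id_in_bop)

locale von_neumann =
  fixes A :: "('h::chilbert \<Rightarrow> 'h) set"
  assumes von_neumann_algebra: "von_neumann_algebra A"
begin

lemma mem_bop: "a \<in> A \<Longrightarrow> a \<in> bop"
  using von_neumann_algebra by (auto simp: von_neumann_algebra_def)

lemma bicommutant_eq: "commutant (commutant A) = A"
  using von_neumann_algebra by (simp add: von_neumann_algebra_def)

lemma op_add_mem: "a \<in> A \<Longrightarrow> b \<in> A \<Longrightarrow> op_add a b \<in> A"
  by (metis bicommutant_eq commutant_subset_bop op_add_in_commutant)

lemma op_diff_mem: "a \<in> A \<Longrightarrow> b \<in> A \<Longrightarrow> op_diff a b \<in> A"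
  by (metis bicommutant_eq commutant_subset_bop op_diff_in_commutant)

lemma op_scale_mem: "a \<in> A \<Longrightarrow> op_scale c a \<in> A"
  by (metis bicommutant_eq commutant_subset_bop op_scale_in_commutant)

lemma id_mem: "id \<in> A"
  by (metis bicommutant_eq id_in_commutant)

lemma zero_mem: "(\<lambda>h. 0) \<in> A"
  using op_scale_mem[OF id_mem, of 0] by (simp add: op_scale_def cscale_def)

end

section \<open>Hermitian and positive operators\<close>

text \<open>Encodes that \<open>cinner (a h) h\<close> is real: its imaginary part is \<open>inner (a h) (iunit h)\<close>.\<close>
definition hermitian :: "('h::chilbert \<Rightarrow> 'h) \<Rightarrow> bool" where
  "hermitian a \<longleftrightarrow> a \<in> bop \<and> (\<forall>h. inner (a h) (iunit h) = 0)"

lemma pos_op_iff_hermitian: "pos_op a \<longleftrightarrow> hermitian a \<and> (\<forall>h. 0 \<le> inner (a h) h)"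
  by (auto simp: pos_op_def hermitian_def cinner_def complex_is_Real_iff)

lemma op_scale_of_real: "op_scale (complex_of_real c) a = (\<lambda>h. c *\<^sub>R a h)"
  by (simp add: op_scale_def cscale_def)

lemma hermitian_op_add: "hermitian a \<Longrightarrow> hermitian b \<Longrightarrow> hermitian (op_add a b)"
  using op_add_in_bop[of a b] by (auto simp: hermitian_def op_add_def inner_add_left)

lemma hermitian_op_diff: "hermitian a \<Longrightarrow> hermitian b \<Longrightarrow> hermitian (op_diff a b)"
  using op_diff_in_bop[of a b] by (auto simp: hermitian_def op_diff_def inner_diff_left)

lemma hermitian_op_scale_real: "hermitian a \<Longrightarrow> hermitian (op_scale (complex_of_real c) a)"
  using op_scale_in_bop[of a "complex_of_real c"] by (auto simp: hermitian_def op_scale_of_real)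

lemma hermitian_id: "hermitian id"
  by (simp add: hermitian_def id_in_bop inner_iunit_self)

lemma pos_op_op_add: "pos_op a \<Longrightarrow> pos_op b \<Longrightarrow> pos_op (op_add a b)"
  using hermitian_op_add[of a b] by (auto simp: pos_op_iff_hermitian op_add_def inner_add_left)

lemma pos_op_op_scale_real: "0 \<le> c \<Longrightarrow> pos_op a \<Longrightarrow> pos_op (op_scale (complex_of_real c) a)"
  using hermitian_op_scale_real[of a c] by (auto simp: pos_op_iff_hermitian op_scale_of_real)

lemma pos_op_zero: "pos_op (\<lambda>h. 0)"
  by (simp add: pos_op_iff_hermitian hermitian_def bop_def bounded_linear_zero
      linear_simps(3)[OF bounded_linear_iunit])

lemma hermitian_inner_commute:
  assumes "hermitian a"
  shows "inner (a u) v = inner (a v) u"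
proof -
  have a: "a \<in> bop" and im: "\<And>h. inner (a h) (iunit h) = 0"
    using assms by (auto simp: hermitian_def)
  have "inner (a u) (iunit v) + inner (a v) (iunit u) = 0" for u v
    using im[of "u + v"] im[of u] im[of v]
    by (simp add: bop_simps[OF a] inner_add_left inner_add_right iunit_add)
  from this[of u "iunit v"] show ?thesis
    by (simp add: bop_simps[OF a] iunit_iunit inner_iunit_left inner_iunit inner_commute)
qed

lemma hermitian_eqI:
  assumes "hermitian a" "hermitian b" and "\<And>h. inner (a h) h = inner (b h) h"
  shows "a = b"
proof -
  let ?c = "op_diff a b"
  have c: "hermitian ?c" using assms(1,2) by (rule hermitian_op_diff)
  then have cb: "?c \<in> bop" by (simp add: hermitian_def)
  have q: "inner (?c h) h = 0" for h
    using assms(3) by (simp add: op_diff_def inner_diff_left)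
  have "inner (?c u) v = 0" for u v
  proof -
    have "inner (?c u) v + inner (?c v) u = 0"
      using q[of "u + v"] q[of u] q[of v] by (simp add: bop_simps[OF cb] inner_add_left inner_add_right)
    with hermitian_inner_commute[OF c, of u v] show ?thesis by linarith
  qed
  then have "?c u = 0" for u by (metis inner_eq_zero_iff)
  then show ?thesis by (auto simp: op_diff_def fun_eq_iff)
qed

lemma adj_op_hermitian:
  assumes "hermitian a"
  shows "adj_op a = a"
  unfolding adj_op_def
proof (rule the_equality)
  have a: "a \<in> bop" using assms by (simp add: hermitian_def)
  have self_adj: "cinner (a x) y = cinner x (a y)" for x y
    using hermitian_inner_commute[OF assms, of x y] hermitian_inner_commute[OF assms, of x "iunit y"]
    by (simp add: cinner_def inner_commute bop_iunit[OF a])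
  then show "a \<in> bop \<and> (\<forall>x y. cinner (a x) y = cinner x (a y))" using a by blast
  fix b assume "b \<in> bop \<and> (\<forall>x y. cinner (a x) y = cinner x (b y))"
  then have "inner x (b y - a y) = 0" for x y
    using self_adj[of x y] by (auto simp: cinner_def inner_diff_right)
  then show "b = a" by (metis eq_iff_diff_eq_0 inner_eq_zero_iff ext)
qed

lemma op_le_iff_inner:
  "hermitian a \<Longrightarrow> hermitian b \<Longrightarrow> op_le a b \<longleftrightarrow> (\<forall>h. inner (a h) h \<le> inner (b h) h)"
  using hermitian_op_diff[of b a] by (auto simp: op_le_def pos_op_iff_hermitian op_diff_def inner_diff_left)

lemma op_le_hermitian:
  assumes "op_le a b" "hermitian a"
  shows "hermitian b"
proof -
  have "hermitian (op_add (op_diff b a) a)"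
    using assms by (intro hermitian_op_add) (simp_all add: op_le_def pos_op_iff_hermitian)
  then show ?thesis by (simp add: op_add_def op_diff_def)
qed

lemma abs_inner_le_onorm: "a \<in> bop \<Longrightarrow> \<bar>inner (a u) v\<bar> \<le> onorm a * norm u * norm v"
  by (metis Cauchy_Schwarz_ineq2 bop_bounded_linear mult_right_mono norm_ge_zero onorm order_trans)

lemma tendsto_of_abs_diff_le:
  fixes f :: "nat \<Rightarrow> real"
  assumes "\<And>k. \<bar>f k - l\<bar> \<le> e k * C" and "e \<longlonglongrightarrow> 0"
  shows "f \<longlonglongrightarrow> l"
proof -
  have "(\<lambda>k. f k - l) \<longlonglongrightarrow> 0"
    by (rule Lim_null_comparison[OF always_eventually tendsto_mult_left_zero[OF assms(2)]])
      (use assms(1) in auto)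
  then show ?thesis by (simp add: LIM_zero_iff)
qed

lemma tendsto_inner_of_op_norm:
  assumes "\<And>k. op_diff (xs k) x \<in> bop" and "(\<lambda>k. op_norm (op_diff (xs k) x)) \<longlonglongrightarrow> 0"
  shows "(\<lambda>k. inner (xs k u) v) \<longlonglongrightarrow> inner (x u) v"
proof (rule tendsto_of_abs_diff_le[OF _ assms(2)])
  show "\<bar>inner (xs k u) v - inner (x u) v\<bar> \<le> op_norm (op_diff (xs k) x) * (norm u * norm v)" for k
    using abs_inner_le_onorm[OF assms(1), of k u v]
    by (simp add: op_norm_def op_diff_def inner_diff_left mult.assoc)
qed

lemma pos_op_op_norm_limit:
  assumes "\<And>k. pos_op (xs k)" "x \<in> bop" and "(\<lambda>k. op_norm (op_diff (xs k) x)) \<longlonglongrightarrow> 0"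
  shows "pos_op x"
proof -
  have "op_diff (xs k) x \<in> bop" for k
    using assms(1,2) by (simp add: op_diff_in_bop pos_op_def)
  note lim = tendsto_inner_of_op_norm[OF this assms(3)]
  have "inner (x h) (iunit h) = 0" for h
    using lim[of h "iunit h"] assms(1) by (simp add: pos_op_iff_hermitian hermitian_def LIMSEQ_const_iff)
  moreover have "0 \<le> inner (x h) h" for h
    using assms(1) by (intro LIMSEQ_le_const[OF lim]) (auto simp: pos_op_iff_hermitian)
  ultimately show ?thesis using assms(2) by (simp add: pos_op_iff_hermitian hermitian_def)
qed

lemma quadratic_nonneg_imp_discriminant:
  fixes a b c :: real
  assumes "0 \<le> c" and nonneg: "\<And>t. 0 \<le> a + 2 * t * b + t\<^sup>2 * c"
  shows "b\<^sup>2 \<le> a * c"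
proof (cases "c = 0")
  case True
  have "b = 0"
  proof (rule ccontr)
    assume "b \<noteq> 0"
    then have "a + 2 * (- (a + 1) / (2 * b)) * b + (- (a + 1) / (2 * b))\<^sup>2 * c = -1"
      using True by (simp add: field_simps)
    with nonneg show False by (metis neg_0_le_iff_le not_one_le_zero)
  qed
  then show ?thesis using True by simp
next
  case False
  then have "0 < c" using assms(1) by simp
  then have "a + 2 * (- b / c) * b + (- b / c)\<^sup>2 * c = a - b\<^sup>2 / c"
    by (simp add: power2_eq_square field_simps)
  then have "b\<^sup>2 / c \<le> a" using nonneg[of "- b / c"] by linarith
  then show ?thesis using \<open>0 < c\<close> by (simp add: pos_divide_le_eq)
qed

lemma pos_op_Cauchy_Schwarz:
  assumes "pos_op b"
  shows "(inner (b u) v)\<^sup>2 \<le> inner (b u) u * inner (b v) v"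
proof (rule quadratic_nonneg_imp_discriminant)
  have b: "hermitian b" "b \<in> bop" and nonneg: "\<And>h. 0 \<le> inner (b h) h"
    using assms by (auto simp: pos_op_iff_hermitian hermitian_def)
  show "0 \<le> inner (b v) v" by (rule nonneg)
  fix t
  have "inner (b (u + t *\<^sub>R v)) (u + t *\<^sub>R v)
      = inner (b u) u + 2 * t * inner (b u) v + t\<^sup>2 * inner (b v) v"
    using hermitian_inner_commute[OF b(1), of u v]
    by (simp add: bop_simps[OF b(2)] inner_add_left inner_add_right power2_eq_square algebra_simps)
  then show "0 \<le> inner (b u) u + 2 * t * inner (b u) v + t\<^sup>2 * inner (b v) v"
    by (metis nonneg)
qed

lemma norm_sq_le_pos_op:
  assumes "pos_op b" and bound: "\<And>v. inner (b v) v \<le> M * (norm v)\<^sup>2"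
  shows "(norm (b h))\<^sup>2 \<le> M * inner (b h) h"
proof (cases "b h = 0")
  case False
  let ?v = "b h"
  have "((norm ?v)\<^sup>2)\<^sup>2 \<le> inner (b h) h * inner (b ?v) ?v"
    using pos_op_Cauchy_Schwarz[OF assms(1), of h ?v] by (simp add: power2_norm_eq_inner)
  also have "\<dots> \<le> inner (b h) h * (M * (norm ?v)\<^sup>2)"
    using assms(1) bound by (intro mult_left_mono) (auto simp: pos_op_iff_hermitian)
  finally show ?thesis
    using False by (simp add: power2_eq_square algebra_simps)
qed (simp add: assms(1)[unfolded pos_op_iff_hermitian])

lemma tendsto_zero_by_approximation:
  fixes f :: "nat \<Rightarrow> real" and g :: "nat \<Rightarrow> nat \<Rightarrow> real"
  assumes "\<And>N. 0 \<le> f N" and "\<And>k N. f N \<le> g k N + c k"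
    and "\<And>k. g k \<longlonglongrightarrow> 0" and "c \<longlonglongrightarrow> 0"
  shows "f \<longlonglongrightarrow> 0"
proof (rule LIMSEQ_I)
  fix r :: real assume "0 < r"
  then obtain k where k: "c k < r / 2"
    using order_tendstoD(2)[OF assms(4), of "r / 2"] by (auto simp: eventually_sequentially)
  obtain M where M: "\<And>N. N \<ge> M \<Longrightarrow> g k N < r / 2"
    using order_tendstoD(2)[OF assms(3), of "r / 2"] \<open>0 < r\<close> by (auto simp: eventually_sequentially)
  have "norm (f N) < r" if "N \<ge> M" for N
    using assms(1)[of N] assms(2)[of N k] k M[OF that] by simp
  then show "\<exists>M. \<forall>N\<ge>M. norm (f N - 0) < r" by auto
qed

lemma incseq_inner_of_op_le:
  assumes "\<And>N. hermitian (s N)" and "\<And>N. op_le (s N) (s (Suc N))"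
  shows "incseq (\<lambda>N. inner (s N h) h)"
  using assms by (intro incseq_SucI) (simp add: op_le_iff_inner)

lemma op_le_chain_directed:
  assumes "\<And>N. hermitian (s N)" and "\<And>N. op_le (s N) (s (Suc N))"
  shows "\<forall>a\<in>range s. \<forall>b\<in>range s. \<exists>c\<in>range s. op_le a c \<and> op_le b c"
proof (intro ballI)
  fix a b assume "a \<in> range s" "b \<in> range s"
  then obtain i j where "a = s i" "b = s j" by auto
  have "op_le (s k) (s (max i j))" if "k \<le> max i j" for k
    using assms incseq_inner_of_op_le[of s, OF assms] that by (simp add: op_le_iff_inner incseq_def)
  then show "\<exists>c\<in>range s. op_le a c \<and> op_le b c"
    using \<open>a = s i\<close> \<open>b = s j\<close> by (intro bexI[of _ "s (max i j)"]) auto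
qed

lemma is_sup_in_strong_limit:
  assumes herm: "\<And>N. hermitian (s N)" and mono: "\<And>N. op_le (s N) (s (Suc N))"
    and y: "y \<in> A" "hermitian y" and lim: "\<And>h. (\<lambda>N. s N h) \<longlonglongrightarrow> y h"
  shows "is_sup_in A (range s) y"
  unfolding is_sup_in_def
proof (intro conjI ballI impI)
  have forms: "(\<lambda>N. inner (s N h) h) \<longlonglongrightarrow> inner (y h) h" for h
    by (intro tendsto_inner lim tendsto_const)
  show "y \<in> self_adjoint_part A"
    using y adj_op_hermitian by (simp add: self_adjoint_part_def)
  show "op_le d y" if "d \<in> range s" for d
    using that herm y(2) incseq_le[OF incseq_inner_of_op_le[of s, OF herm mono] forms]
    by (auto simp: op_le_iff_inner)
  fix z assume ub: "\<forall>d\<in>range s. op_le d z"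
  then have z: "hermitian z" using op_le_hermitian herm by blast
  have "inner (y h) h \<le> inner (z h) h" for h
    using ub herm z by (intro LIMSEQ_le_const2[OF forms]) (auto simp: op_le_iff_inner)
  then show "op_le y z" using y(2) z by (simp add: op_le_iff_inner)
qed

lemma is_sup_in_unique:
  assumes "is_sup_in A D x" "is_sup_in A D z" and "d \<in> D" "hermitian d"
  shows "x = z"
proof -
  have "op_le d x" "op_le d z" using assms by (auto simp: is_sup_in_def)
  then have hx: "hermitian x" and hz: "hermitian z" using assms(4) op_le_hermitian by blast+
  have "op_le x z" "op_le z x" using assms(1,2) by (auto simp: is_sup_in_def)
  then show ?thesis
    using hx hz by (intro hermitian_eqI) (auto simp: op_le_iff_inner intro: antisym)
qed

lemma pos_op_iff_mat_pos_1: "mat_pos (Suc 0) (\<lambda>i j. a) \<longleftrightarrow> pos_op a"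
  by (auto simp: mat_pos_def pos_op_def Let_def)

section \<open>Markov operators and their potentials\<close>

definition partial_sums :: "(('h::chilbert \<Rightarrow> 'h) \<Rightarrow> ('h \<Rightarrow> 'h)) \<Rightarrow> ('h \<Rightarrow> 'h) \<Rightarrow> nat \<Rightarrow> ('h \<Rightarrow> 'h)"
  where "partial_sums T x N = (\<lambda>h. \<Sum>n<N. (T ^^ n) x h)"

lemma partial_sums_0: "partial_sums T x 0 = (\<lambda>h. 0)"
  by (simp add: partial_sums_def)

lemma partial_sums_Suc: "partial_sums T x (Suc N) = op_add (partial_sums T x N) ((T ^^ N) x)"
  by (simp add: partial_sums_def op_add_def)

lemma strong_sums_iff_partial_sums:
  "strong_sums (\<lambda>n. (T ^^ n) x) y \<longleftrightarrow> (\<forall>h. (\<lambda>N. partial_sums T x N h) \<longlonglongrightarrow> y h)"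
  by (simp add: strong_sums_def partial_sums_def)

locale markov = von_neumann +
  fixes T :: "('h::chilbert \<Rightarrow> 'h) \<Rightarrow> ('h \<Rightarrow> 'h)"
  assumes markov_operator: "markov_operator A T"
begin

lemma T_mem: "a \<in> A \<Longrightarrow> T a \<in> A"
  using markov_operator by (auto simp: markov_operator_def)

lemma T_op_add: "a \<in> A \<Longrightarrow> b \<in> A \<Longrightarrow> T (op_add a b) = op_add (T a) (T b)"
  using markov_operator by (auto simp: markov_operator_def linear_on_def)

lemma T_op_scale: "a \<in> A \<Longrightarrow> T (op_scale c a) = op_scale c (T a)"
  using markov_operator by (auto simp: markov_operator_def linear_on_def)

lemma T_op_diff: "a \<in> A \<Longrightarrow> b \<in> A \<Longrightarrow> T (op_diff a b) = op_diff (T a) (T b)"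
proof -
  have "op_diff a b = op_add a (op_scale (-1) b)" for a b :: "'h \<Rightarrow> 'h"
    by (simp add: op_diff_def op_add_def op_scale_def cscale_def fun_eq_iff)
  then show "a \<in> A \<Longrightarrow> b \<in> A \<Longrightarrow> ?thesis" by (simp add: T_op_add T_op_scale op_scale_mem)
qed

lemma T_zero: "T (\<lambda>h. 0) = (\<lambda>h. 0)"
  using T_op_scale[OF zero_mem, of 0] by (simp add: op_scale_def cscale_def)

lemma T_id: "T id = id"
  using markov_operator by (simp add: markov_operator_def)

lemma T_pos: "a \<in> A \<Longrightarrow> pos_op a \<Longrightarrow> pos_op (T a)"
  using markov_operator unfolding markov_operator_def completely_positive_on_def
  by (elim conjE allE[of _ "Suc 0"] allE[of _ "\<lambda>i j. a"]) (simp add: pos_op_iff_mat_pos_1)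

lemma normal: "normal_on A T"
  using markov_operator by (simp add: markov_operator_def)

lemma funpow_mem: "a \<in> A \<Longrightarrow> (T ^^ n) a \<in> A"
  by (induction n) (auto simp: T_mem)

lemma funpow_op_add: "a \<in> A \<Longrightarrow> b \<in> A \<Longrightarrow> (T ^^ n) (op_add a b) = op_add ((T ^^ n) a) ((T ^^ n) b)"
  by (induction n) (auto simp: T_op_add funpow_mem)

lemma funpow_op_scale: "a \<in> A \<Longrightarrow> (T ^^ n) (op_scale c a) = op_scale c ((T ^^ n) a)"
  by (induction n) (auto simp: T_op_scale funpow_mem)

lemma funpow_op_diff: "a \<in> A \<Longrightarrow> b \<in> A \<Longrightarrow> (T ^^ n) (op_diff a b) = op_diff ((T ^^ n) a) ((T ^^ n) b)"
  by (induction n) (auto simp: T_op_diff funpow_mem)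

lemma funpow_id: "(T ^^ n) id = id"
  by (induction n) (simp_all add: T_id[unfolded id_def])

lemma funpow_pos: "a \<in> A \<Longrightarrow> pos_op a \<Longrightarrow> pos_op ((T ^^ n) a)"
  by (induction n) (auto simp: T_pos funpow_mem)

text \<open>Apply the positive unital map \<open>T\<^sup>N\<close> to \<open>\<parallel>d\<parallel> \<plusminus> d \<ge> 0\<close>.\<close>
lemma abs_inner_funpow_le:
  assumes "d \<in> A" "hermitian d"
  shows "\<bar>inner ((T ^^ N) d h) h\<bar> \<le> onorm d * (norm h)\<^sup>2"
proof -
  let ?e = "op_scale (complex_of_real (onorm d)) id"
  have e: "?e \<in> A" "hermitian ?e" "(T ^^ N) ?e = ?e"
    by (simp_all add: op_scale_mem id_mem hermitian_op_scale_real hermitian_id funpow_op_scale funpow_id)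
  have form_e: "inner (?e h) h = onorm d * (norm h)\<^sup>2" for h
    by (simp add: op_scale_of_real power2_norm_eq_inner)
  have "0 \<le> inner (op_add ?e d h) h" "0 \<le> inner (op_diff ?e d h) h" for h
    using abs_inner_le_onorm[of d h h] assms(2)
    by (auto simp: hermitian_def op_add_def op_diff_def inner_add_left inner_diff_left form_e
        power2_eq_square mult.assoc abs_le_iff)
  then have "pos_op (op_add ?e d)" "pos_op (op_diff ?e d)"
    using hermitian_op_add[OF e(2) assms(2)] hermitian_op_diff[OF e(2) assms(2)]
    by (simp_all add: pos_op_iff_hermitian)
  then have "pos_op (op_add ?e ((T ^^ N) d))" "pos_op (op_diff ?e ((T ^^ N) d))"
    using funpow_pos[OF op_add_mem[OF e(1) assms(1)], where n=N]
      funpow_pos[OF op_diff_mem[OF e(1) assms(1)], where n=N]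
    by (simp_all add: funpow_op_add funpow_op_diff e(1,3) assms(1))
  then have "0 \<le> inner (op_add ?e ((T ^^ N) d) h) h" "0 \<le> inner (op_diff ?e ((T ^^ N) d) h) h"
    by (simp_all add: pos_op_iff_hermitian)
  then show ?thesis
    by (simp add: op_add_def op_diff_def inner_add_left inner_diff_left form_e abs_le_iff)
qed

lemma tendsto_inner_funpow:
  assumes "\<And>k. xs k \<in> A" "\<And>k. hermitian (xs k)" "x \<in> A" "hermitian x"
    and "(\<lambda>k. op_norm (op_diff (xs k) x)) \<longlonglongrightarrow> 0"
  shows "(\<lambda>k. inner ((T ^^ N) (xs k) h) h) \<longlonglongrightarrow> inner ((T ^^ N) x h) h"
proof (rule tendsto_of_abs_diff_le[OF _ assms(5)])
  fix k
  have "\<bar>inner ((T ^^ N) (op_diff (xs k) x) h) h\<bar> \<le> op_norm (op_diff (xs k) x) * (norm h)\<^sup>2"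
    using assms by (simp add: abs_inner_funpow_le op_diff_mem hermitian_op_diff op_norm_def)
  then show "\<bar>inner ((T ^^ N) (xs k) h) h - inner ((T ^^ N) x h) h\<bar>
      \<le> op_norm (op_diff (xs k) x) * (norm h)\<^sup>2"
    unfolding funpow_op_diff[OF assms(1,3)] by (simp add: op_diff_def inner_diff_left)
qed

lemma partial_sums_mem: "x \<in> A \<Longrightarrow> partial_sums T x N \<in> A"
  by (induction N) (auto simp: partial_sums_0 partial_sums_Suc zero_mem op_add_mem funpow_mem)

lemma partial_sums_pos: "x \<in> A \<Longrightarrow> pos_op x \<Longrightarrow> pos_op (partial_sums T x N)"
  by (induction N) (auto simp: partial_sums_0 partial_sums_Suc pos_op_zero pos_op_op_add funpow_pos)

lemma T_partial_sums: "x \<in> A \<Longrightarrow> T (partial_sums T x N) = op_diff (partial_sums T x (Suc N)) x"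
proof (induction N)
  case 0
  then show ?case by (simp add: partial_sums_0 partial_sums_Suc T_zero op_diff_def op_add_def)
next
  case (Suc N)
  have "T (partial_sums T x (Suc N)) = op_add (T (partial_sums T x N)) (T ((T ^^ N) x))"
    using Suc.prems by (simp add: partial_sums_Suc T_op_add partial_sums_mem funpow_mem)
  also have "\<dots> = op_diff (partial_sums T x (Suc (Suc N))) x"
    using Suc by (simp add: partial_sums_Suc op_add_def op_diff_def algebra_simps)
  finally show ?case .
qed

lemma partial_sums_telescope:
  assumes "y \<in> A"
  shows "partial_sums T (op_diff y (T y)) N = op_diff y ((T ^^ N) y)"
proof (induction N)
  case (Suc N)
  have "(T ^^ N) (op_diff y (T y)) = op_diff ((T ^^ N) y) ((T ^^ Suc N) y)"
    using assms by (simp add: funpow_op_diff T_mem funpow_swap1)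
  with Suc show ?case by (simp add: partial_sums_Suc op_add_def op_diff_def)
qed (simp add: partial_sums_0 op_diff_def)

lemma T_potential_eq:
  assumes x: "x \<in> pos_part A" and y: "y \<in> pos_part A"
    and sums: "strong_sums (\<lambda>n. (T ^^ n) x) y"
  shows "T y = op_diff y x"
proof -
  let ?s = "partial_sums T x"
  have xA: "x \<in> A" "pos_op x" and yA: "y \<in> A" "pos_op y"
    using x y by (auto simp: pos_part_def)
  have herm: "hermitian (?s N)" "hermitian (op_diff (?s N) x)" for N
    using partial_sums_pos[OF xA] xA(2) by (auto simp: pos_op_iff_hermitian hermitian_op_diff)
  have step: "op_le (?s N) (?s (Suc N))" "op_le (op_diff (?s N) x) (op_diff (?s (Suc N)) x)" for N
    using funpow_pos[OF xA, of N] by (simp_all add: op_le_def partial_sums_Suc op_diff_def op_add_def)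
  have lim: "(\<lambda>N. ?s N h) \<longlonglongrightarrow> y h" for h
    using sums by (simp add: strong_sums_iff_partial_sums)
  have hy: "hermitian y" using yA(2) by (simp add: pos_op_iff_hermitian)
  have "is_sup_in A (range ?s) y"
    by (rule is_sup_in_strong_limit[OF herm(1) step(1) yA(1) hy lim])
  moreover have "range ?s \<subseteq> pos_part A"
    using partial_sums_mem partial_sums_pos xA by (auto simp: pos_part_def)
  ultimately have sup_T: "is_sup_in A (T ` range ?s) (T y)"
    using op_le_chain_directed[of ?s, OF herm(1) step(1)]
    by (intro normal[unfolded normal_on_def, rule_format]) auto
  have img: "T ` range ?s = range (\<lambda>N. op_diff (?s (Suc N)) x)"
    using T_partial_sums[OF xA(1)] by (auto simp: image_image)
  have "is_sup_in A (range (\<lambda>N. op_diff (?s (Suc N)) x)) (op_diff y x)"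
  proof (rule is_sup_in_strong_limit)
    show "(\<lambda>N. op_diff (?s (Suc N)) x h) \<longlonglongrightarrow> op_diff y x h" for h
      unfolding op_diff_def using LIMSEQ_Suc[OF lim] by (rule tendsto_diff[OF _ tendsto_const])
    show "op_diff y x \<in> A" by (rule op_diff_mem[OF yA(1) xA(1)])
    show "hermitian (op_diff y x)"
      using hy xA(2) by (simp add: pos_op_iff_hermitian hermitian_op_diff)
  qed (use herm step in simp_all)
  then show ?thesis
    using is_sup_in_unique[OF sup_T _ _ herm(2)[of "Suc 0"]] by (simp add: img)
qed

lemma potentials_iff:
  "y \<in> potentials A T \<longleftrightarrow>
     y \<in> pos_part A \<and> op_diff y (T y) \<in> pos_part A \<and> (\<forall>h. (\<lambda>N. (T ^^ N) y h) \<longlonglongrightarrow> 0)"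
proof
  assume "y \<in> potentials A T"
  then obtain x where y: "y \<in> pos_part A" and x: "x \<in> pos_part A"
    and sums: "strong_sums (\<lambda>n. (T ^^ n) x) y"
    by (auto simp: potentials_def T_summable_def)
  have "op_diff y (T y) = x"
    using T_potential_eq[OF x y sums] by (simp add: op_diff_def)
  moreover have "(\<lambda>N. (T ^^ N) y h) \<longlonglongrightarrow> 0" for h
  proof -
    have "(\<lambda>N. y h - partial_sums T x N h) \<longlonglongrightarrow> y h - y h"
      using sums by (intro tendsto_diff tendsto_const) (simp add: strong_sums_iff_partial_sums)
    then show ?thesis
      using partial_sums_telescope[of y] y \<open>op_diff y (T y) = x\<close>
      by (simp add: pos_part_def op_diff_def)
  qed
  ultimately show "y \<in> pos_part A \<and> op_diff y (T y) \<in> pos_part A \<and> (\<forall>h. (\<lambda>N. (T ^^ N) y h) \<longlonglongrightarrow> 0)"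
    using x y by simp
next
  assume y: "y \<in> pos_part A \<and> op_diff y (T y) \<in> pos_part A \<and> (\<forall>h. (\<lambda>N. (T ^^ N) y h) \<longlonglongrightarrow> 0)"
  have "(\<lambda>N. y h - (T ^^ N) y h) \<longlonglongrightarrow> y h - 0" for h
    using y by (intro tendsto_diff tendsto_const) auto
  moreover have "partial_sums T (op_diff y (T y)) N h = y h - (T ^^ N) y h" for N h
    using y partial_sums_telescope[of y] by (simp add: pos_part_def op_diff_def)
  ultimately have "strong_sums (\<lambda>n. (T ^^ n) (op_diff y (T y))) y"
    by (simp add: strong_sums_iff_partial_sums)
  then show "y \<in> potentials A T"
    using y by (auto simp: potentials_def T_summable_def)
qed

lemma potentials_op_add:
  assumes "y \<in> potentials A T" "z \<in> potentials A T"
  shows "op_add y z \<in> potentials A T"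
proof -
  have y: "y \<in> A" "pos_op y" "op_diff y (T y) \<in> A" "pos_op (op_diff y (T y))"
    "\<And>h. (\<lambda>N. (T ^^ N) y h) \<longlonglongrightarrow> 0"
    using assms(1) potentials_iff by (auto simp: pos_part_def)
  have z: "z \<in> A" "pos_op z" "op_diff z (T z) \<in> A" "pos_op (op_diff z (T z))"
    "\<And>h. (\<lambda>N. (T ^^ N) z h) \<longlonglongrightarrow> 0"
    using assms(2) potentials_iff by (auto simp: pos_part_def)
  have "op_diff (op_add y z) (T (op_add y z)) = op_add (op_diff y (T y)) (op_diff z (T z))"
    unfolding T_op_add[OF y(1) z(1)] by (simp add: op_add_def op_diff_def algebra_simps)
  moreover have "(\<lambda>N. (T ^^ N) (op_add y z) h) \<longlonglongrightarrow> 0" for h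
    using tendsto_add[OF y(5)[of h] z(5)[of h]]
    unfolding funpow_op_add[OF y(1) z(1)] by (simp add: op_add_def)
  ultimately show ?thesis
    using y z by (simp add: potentials_iff pos_part_def op_add_mem pos_op_op_add)
qed

lemma potentials_op_scale:
  assumes "y \<in> potentials A T" "0 \<le> c"
  shows "op_scale (complex_of_real c) y \<in> potentials A T"
proof -
  have y: "y \<in> A" "pos_op y" "op_diff y (T y) \<in> A" "pos_op (op_diff y (T y))"
    "\<And>h. (\<lambda>N. (T ^^ N) y h) \<longlonglongrightarrow> 0"
    using assms(1) potentials_iff by (auto simp: pos_part_def)
  let ?c = "complex_of_real c"
  have "op_diff (op_scale ?c y) (T (op_scale ?c y)) = op_scale ?c (op_diff y (T y))"
    unfolding T_op_scale[OF y(1)] by (simp add: op_scale_of_real op_diff_def scaleR_diff_right)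
  moreover have "(\<lambda>N. (T ^^ N) (op_scale ?c y) h) \<longlonglongrightarrow> 0" for h
    using tendsto_scaleR[OF tendsto_const[of c] y(5)]
    unfolding funpow_op_scale[OF y(1)] by (simp add: op_scale_of_real)
  ultimately show ?thesis
    using y assms(2) by (simp add: potentials_iff pos_part_def op_scale_mem pos_op_op_scale_real)
qed

lemma potentials_T:
  assumes "y \<in> potentials A T"
  shows "T y \<in> potentials A T"
proof -
  have y: "y \<in> A" "pos_op y" "op_diff y (T y) \<in> A" "pos_op (op_diff y (T y))"
    "\<And>h. (\<lambda>N. (T ^^ N) y h) \<longlonglongrightarrow> 0"
    using assms potentials_iff by (auto simp: pos_part_def)
  have "op_diff (T y) (T (T y)) = T (op_diff y (T y))"
    by (simp add: T_op_diff y(1) T_mem)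
  moreover have "(\<lambda>N. (T ^^ N) (T y) h) \<longlonglongrightarrow> 0" for h
    using LIMSEQ_Suc[OF y(5)] by (simp add: funpow_swap1)
  ultimately show ?thesis
    using y by (simp add: potentials_iff pos_part_def T_mem T_pos)
qed

lemma inner_funpow_le:
  assumes "y \<in> A" "pos_op (op_diff y (T y))"
  shows "inner ((T ^^ N) y h) h \<le> inner (y h) h"
proof -
  have "inner ((T ^^ Suc n) y h) h \<le> inner ((T ^^ n) y h) h" for n
  proof -
    have "pos_op ((T ^^ n) (op_diff y (T y)))"
      using assms by (simp add: funpow_pos op_diff_mem T_mem)
    then show ?thesis
      unfolding funpow_op_diff[OF assms(1) T_mem[OF assms(1)]]
      by (simp add: funpow_swap1 pos_op_iff_hermitian op_diff_def inner_diff_left)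
  qed
  then have "decseq (\<lambda>n. inner ((T ^^ n) y h) h)" by (rule decseq_SucI)
  from decseqD[OF this, of 0 N] show ?thesis by simp
qed

lemma funpow_tendsto_zero:
  assumes "y \<in> A" "pos_op y" "pos_op (op_diff y (T y))"
    and weak: "(\<lambda>N. inner ((T ^^ N) y h) h) \<longlonglongrightarrow> 0"
  shows "(\<lambda>N. (T ^^ N) y h) \<longlonglongrightarrow> 0"
proof (rule Lim_null_comparison)
  let ?M = "onorm y"
  have "inner ((T ^^ N) y v) v \<le> ?M * (norm v)\<^sup>2" for N v
    using inner_funpow_le[OF assms(1,3), of N v] abs_inner_le_onorm[OF mem_bop[OF assms(1)], of v v]
    by (simp add: power2_eq_square mult.assoc)
  then have "(norm ((T ^^ N) y h))\<^sup>2 \<le> ?M * inner ((T ^^ N) y h) h" for N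
    by (intro norm_sq_le_pos_op funpow_pos assms(1,2))
  then show "\<forall>\<^sub>F N in sequentially. norm ((T ^^ N) y h) \<le> sqrt (?M * inner ((T ^^ N) y h) h)"
    by (intro always_eventually allI real_le_rsqrt)
  show "(\<lambda>N. sqrt (?M * inner ((T ^^ N) y h) h)) \<longlonglongrightarrow> 0"
    using tendsto_real_sqrt[OF tendsto_mult[OF tendsto_const[of ?M] weak]] by simp
qed

lemma pos_op_diff_T_norm_limit:
  assumes "\<And>k. xs k \<in> A" "\<And>k. pos_op (xs k)" "\<And>k. pos_op (op_diff (xs k) (T (xs k)))"
    and "x \<in> A" "pos_op x" and lim: "(\<lambda>k. op_norm (op_diff (xs k) x)) \<longlonglongrightarrow> 0"
  shows "pos_op (op_diff x (T x))"
proof -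
  have hx: "hermitian x" and herm_xs: "hermitian (xs k)" for k
    using assms(2,5) by (simp_all add: pos_op_iff_hermitian)
  note forms = tendsto_inner_funpow[OF assms(1) herm_xs assms(4) hx lim]
  have "0 \<le> inner (x h) h - inner (T x h) h" for h
  proof (rule LIMSEQ_le_const)
    show "(\<lambda>k. inner (xs k h) h - inner (T (xs k) h) h) \<longlonglongrightarrow> inner (x h) h - inner (T x h) h"
      using tendsto_diff[OF forms[of 0 h] forms[of 1 h]] by simp
    show "\<exists>N. \<forall>k\<ge>N. 0 \<le> inner (xs k h) h - inner (T (xs k) h) h"
      using assms(3) by (auto simp: pos_op_iff_hermitian op_diff_def inner_diff_left)
  qed
  moreover have "hermitian (op_diff x (T x))"
    using hx T_pos[OF assms(4,5)] by (simp add: pos_op_iff_hermitian hermitian_op_diff)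
  ultimately show ?thesis
    by (simp add: pos_op_iff_hermitian op_diff_def inner_diff_left)
qed

lemma potentials_closed:
  assumes ys: "\<And>k. ys k \<in> potentials A T" and "y \<in> A"
    and lim: "(\<lambda>k. op_norm (op_diff (ys k) y)) \<longlonglongrightarrow> 0"
  shows "y \<in> potentials A T"
proof -
  have ys_A: "ys k \<in> A" "pos_op (ys k)" "pos_op (op_diff (ys k) (T (ys k)))"
    "\<And>h. (\<lambda>N. (T ^^ N) (ys k) h) \<longlonglongrightarrow> 0" for k
    using ys[of k] potentials_iff by (auto simp: pos_part_def)
  have py: "pos_op y"
    using ys_A(2) by (rule pos_op_op_norm_limit[OF _ mem_bop[OF \<open>y \<in> A\<close>] lim])
  have hy: "hermitian y" using py by (simp add: pos_op_iff_hermitian)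
  have herm_ys: "hermitian (ys k)" for k using ys_A(2) by (simp add: pos_op_iff_hermitian)
  have py': "pos_op (op_diff y (T y))"
    by (rule pos_op_diff_T_norm_limit[OF ys_A(1-3) \<open>y \<in> A\<close> py lim])
  have "(\<lambda>N. inner ((T ^^ N) y h) h) \<longlonglongrightarrow> 0" for h
  proof (rule tendsto_zero_by_approximation)
    show "0 \<le> inner ((T ^^ N) y h) h" for N
      using funpow_pos[OF \<open>y \<in> A\<close> py] by (simp add: pos_op_iff_hermitian)
    show "inner ((T ^^ N) y h) h
        \<le> inner ((T ^^ N) (ys k) h) h + op_norm (op_diff (ys k) y) * (norm h)\<^sup>2" for k N
      using abs_inner_funpow_le[OF op_diff_mem[OF ys_A(1)[of k] \<open>y \<in> A\<close>]
          hermitian_op_diff[OF herm_ys[of k] hy], of N h]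
      unfolding funpow_op_diff[OF ys_A(1)[of k] \<open>y \<in> A\<close>]
      by (simp add: op_diff_def inner_diff_left op_norm_def abs_le_iff)
    show "(\<lambda>N. inner ((T ^^ N) (ys k) h) h) \<longlonglongrightarrow> 0" for k
      using tendsto_inner[OF ys_A(4) tendsto_const] by simp
    show "(\<lambda>k. op_norm (op_diff (ys k) y) * (norm h)\<^sup>2) \<longlonglongrightarrow> 0"
      by (rule tendsto_mult_left_zero[OF lim])
  qed
  then have "(\<lambda>N. (T ^^ N) y h) \<longlonglongrightarrow> 0" for h
    by (rule funpow_tendsto_zero[OF \<open>y \<in> A\<close> py py'])
  then show ?thesis
    using \<open>y \<in> A\<close> py py' by (simp add: potentials_iff pos_part_def op_diff_mem T_mem)
qed

end

theorem corollary3p5: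
  fixes A :: "('h::chilbert \<Rightarrow> 'h) set"
    and T :: "('h \<Rightarrow> 'h) \<Rightarrow> ('h \<Rightarrow> 'h)"
  assumes "von_neumann_algebra A"
    and "markov_operator A T"
  shows "potentials A T \<subseteq> pos_part A
    \<and> (\<forall>y\<in>potentials A T. \<forall>z\<in>potentials A T. op_add y z \<in> potentials A T)
    \<and> (\<forall>y\<in>potentials A T. \<forall>c::real. c \<ge> 0 \<longrightarrow> op_scale (complex_of_real c) y \<in> potentials A T)
    \<and> (\<forall>ys y. (\<forall>k. ys k \<in> potentials A T) \<and> y \<in> A \<and> (\<lambda>k. op_norm (op_diff (ys k) y)) \<longlonglongrightarrow> 0
          \<longrightarrow> y \<in> potentials A T)
    \<and> T ` potentials A T \<subseteq> potentials A T"
proof -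
  interpret markov A T
    using assms by (simp add: markov_def markov_axioms_def von_neumann_def)
  have "potentials A T \<subseteq> pos_part A"
    by (auto simp: potentials_def)
  then show ?thesis
    using potentials_op_add potentials_op_scale potentials_closed potentials_T by blast
qed

end
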